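(* Let $a,\lambda\in\mathbb{R}^n$ and $\beta\in\mathbb{R}^m$ with $\|a\|=\|\lambda\|=\|\beta\|=1$, $\lambda\neq\pm a$, and $d\in\mathbb{R}^m$ with $\|d\|<1$, such that $\lambda^\mathsf{T} a+d^\mathsf{T}\beta\ge0$. Let $$x_\beta=\sqrt{\tfrac{1-(d^\mathsf{T}\beta)^2}{1-(\lambda^\mathsf{T} a)^2}}\,\lambda-\Big(d^\mathsf{T}\beta+\lambda^\mathsf{T} a\sqrt{\tfrac{1-(d^\mathsf{T}\beta)^2}{1-(\lambda^\mathsf{T} a)^2}}\Big)a$$ (the optimal solution of $\max_x\{\lambda^\mathsf{T} x:\|x\|\le1,\ a^\mathsf{T} x+d^\mathsf{T}\beta\le0\}$), and $\phi_\lambda(\beta)=\max_x\{\lambda^\mathsf{T} x:\|x\|\le1,\ a^\mathsf{T} x+d^\mathsf{T}\beta\le0\}$. Then every sequence $(x_k)_k$ in the span $\langle\lambda,a\rangle$ converging to $x_\beta$ with $\|x_k\|=1$ and $a^\mathsf{T} x_k+d^\mathsf{T}\beta<0$ for all $k$ satisfies $$\lim_{k\to\infty}\frac{\lambda^\mathsf{T}(x_k-x_\beta)}{a^\mathsf{T}(x_k-x_\beta)}=\frac{d^\mathsf{T}\beta+\lambda^\mathsf{T} a\,\phi_\lambda(\beta)}{\phi_\lambda(\beta)+d^\mathsf{T}\beta\,\lambda^\mathsf{T} a}.$$ Moreover, such sequences always exist.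
   Context: $\|\cdot\|$ is the Euclidean norm; $\langle\lambda,a\rangle$ denotes the linear span of $\lambda$ and $a$. *)

theory Defs
  imports "HOL-Analysis.Analysis"
begin

text \<open>phi_lambda(beta) = max { lam . x : norm x <= 1, a . x + d . beta <= 0 }.
  The maximum is written as a supremum (it is attained whenever the feasible set is nonempty).\<close>
definition phi_val :: "'a::euclidean_space \<Rightarrow> 'a \<Rightarrow> 'b::euclidean_space \<Rightarrow> 'b \<Rightarrow> real" where
  "phi_val lam a d beta = (SUP x \<in> {x. norm x \<le> 1 \<and> a \<bullet> x + d \<bullet> beta \<le> 0}. lam \<bullet> x)"

end

theory Submission
  imports Defs
begin

text \<open>Write c = lam \<bullet> a, t = d \<bullet> beta, m = sqrt (1 - c^2), r = sqrt (1 - t^2) and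
  complete a to an orthonormal basis a, e of span {lam, a}; then lam = c a + m e and
  x_beta = -t a + r e lies on the unit circle of this plane. Since lam is a nonnegative combination
  of x_beta and the constraint normal a (this is where lam \<bullet> a + d \<bullet> beta \<ge> 0 enters),
  x_beta is the maximiser and phi_lambda(beta) = m r - c t. For unit vectors X = p a + q e of the
  plane the difference quotient is c + m (q - r) / (p + t), and these chord slopes of the circle
  tend to the tangent slope t / r at (-t, r); the limit c + m t / r is the claimed ratio. Points
  of the circle with p slightly below -t provide the sequences.\<close>

lemma abs_inner_less_one_of_unit_vectors:
  fixes a lam :: "'a::real_inner"
  assumes "norm a = 1" "norm lam = 1" "lam \<noteq> a" "lam \<noteq> - a"
  shows "\<bar>lam \<bullet> a\<bar> < 1"
proof -
  have "\<bar>lam \<bullet> a\<bar> \<le> 1"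
    using Cauchy_Schwarz_ineq2[of lam a] assms(1,2) by simp
  moreover have "\<bar>lam \<bullet> a\<bar> \<noteq> 1"
    using norm_cauchy_schwarz_abs_eq[of lam a] assms by auto
  ultimately show ?thesis by simp
qed

lemma orthonormal_frame_of_unit_vectors:
  fixes a lam :: "'a::real_inner"
  assumes "norm a = 1" "norm lam = 1" "\<bar>lam \<bullet> a\<bar> < 1"
  obtains e where "e \<bullet> e = 1" "a \<bullet> e = 0"
    "lam = (lam \<bullet> a) *\<^sub>R a + sqrt (1 - (lam \<bullet> a)\<^sup>2) *\<^sub>R e"
proof
  define c m where "c = lam \<bullet> a" and "m = sqrt (1 - c\<^sup>2)"
  define e where "e = (1 / m) *\<^sub>R (lam - c *\<^sub>R a)"
  have aa: "a \<bullet> a = 1" and ll: "lam \<bullet> lam = 1"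
    using assms(1,2) by (simp_all add: dot_square_norm)
  have "c\<^sup>2 < 1"
    using assms(3) by (simp add: c_def abs_square_less_1)
  then have msq: "m\<^sup>2 = 1 - c\<^sup>2" and m_pos: "m > 0"
    by (simp_all add: m_def)
  have "(lam - c *\<^sub>R a) \<bullet> (lam - c *\<^sub>R a) = m\<^sup>2"
    using aa ll msq by (simp add: c_def algebra_simps inner_commute power2_eq_square)
  then show "e \<bullet> e = 1"
    using m_pos by (simp add: e_def power2_eq_square)
  show "a \<bullet> e = 0"
    using aa by (simp add: e_def c_def inner_diff_right inner_commute)
  show "lam = c *\<^sub>R a + m *\<^sub>R e"
    using m_pos by (simp add: e_def)
qed

lemma sqrt_one_minus_square_combination_nonneg:
  fixes c t :: real
  assumes "\<bar>c\<bar> \<le> 1" "\<bar>t\<bar> \<le> 1" "0 \<le> c + t"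
  shows "0 \<le> t * sqrt (1 - c\<^sup>2) + c * sqrt (1 - t\<^sup>2)"
proof -
  \<comment> \<open>The expression is symmetric in c and t; the summand of the variable of larger modulus wins.\<close>
  have dominated: "0 \<le> y * sqrt (1 - x\<^sup>2) + x * sqrt (1 - y\<^sup>2)"
    if "\<bar>y\<bar> \<le> \<bar>x\<bar>" "0 \<le> x" "\<bar>x\<bar> \<le> 1" for x y :: real
  proof -
    have squares: "y\<^sup>2 \<le> x\<^sup>2" "x\<^sup>2 \<le> 1"
      using that abs_le_square_iff abs_square_le_1 by blast+
    then have "(y * sqrt (1 - x\<^sup>2))\<^sup>2 \<le> (x * sqrt (1 - y\<^sup>2))\<^sup>2"
      by (simp add: algebra_simps)
    then have "\<bar>y * sqrt (1 - x\<^sup>2)\<bar> \<le> x * sqrt (1 - y\<^sup>2)"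
      using that(2) squares by (simp add: abs_le_square_iff[symmetric] abs_mult)
    then show ?thesis
      by linarith
  qed
  consider "\<bar>t\<bar> \<le> \<bar>c\<bar>" "0 \<le> c" | "\<bar>c\<bar> \<le> \<bar>t\<bar>" "0 \<le> t"
    using assms(3) by linarith
  then show ?thesis
    using dominated[of t c] dominated[of c t] assms(1,2) by cases (simp_all add: add.commute)
qed

lemma inner_le_at_conic_combination:
  fixes lam u a x :: "'a::real_inner"
  assumes "norm u = 1" "lam = p *\<^sub>R u + q *\<^sub>R a" "0 \<le> p" "0 \<le> q"
    and "norm x \<le> 1" "a \<bullet> x \<le> a \<bullet> u"
  shows "lam \<bullet> x \<le> lam \<bullet> u"
proof -
  have "u \<bullet> x \<le> u \<bullet> u"
    using Cauchy_Schwarz_ineq2[of u x] assms(1,5) by (simp add: dot_square_norm)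
  then have "p * (u \<bullet> x) + q * (a \<bullet> x) \<le> p * (u \<bullet> u) + q * (a \<bullet> u)"
    using assms(3,4,6) by (intro add_mono mult_left_mono)
  then show ?thesis
    using assms(2) by (simp add: inner_add_left)
qed

lemma phi_val_eq_at_conic_combination:
  fixes lam a u :: "'a::euclidean_space" and d beta :: "'b::euclidean_space"
  assumes "norm u = 1" "a \<bullet> u + d \<bullet> beta = 0"
    and "lam = p *\<^sub>R u + q *\<^sub>R a" "0 \<le> p" "0 \<le> q"
  shows "phi_val lam a d beta = lam \<bullet> u"
  unfolding phi_val_def
proof (rule cSup_eq_maximum)
  show "lam \<bullet> u \<in> (\<bullet>) lam ` {x. norm x \<le> 1 \<and> a \<bullet> x + d \<bullet> beta \<le> 0}"
    using assms(1,2) by auto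
  show "y \<le> lam \<bullet> u" if "y \<in> (\<bullet>) lam ` {x. norm x \<le> 1 \<and> a \<bullet> x + d \<bullet> beta \<le> 0}" for y
    using that inner_le_at_conic_combination[OF assms(1,3-5)] assms(2) by force
qed

lemma unit_circle_chord_slope_tendsto:
  fixes p q :: "nat \<Rightarrow> real"
  assumes "\<And>k. (p k)\<^sup>2 + (q k)\<^sup>2 = 1" "p0\<^sup>2 + q0\<^sup>2 = 1" "q0 \<noteq> 0"
    and "p \<longlonglongrightarrow> p0" "q \<longlonglongrightarrow> q0" "\<And>k. p k \<noteq> p0"
  shows "(\<lambda>k. (q k - q0) / (p k - p0)) \<longlonglongrightarrow> - p0 / q0"
proof -
  have "(\<lambda>k. - (p k + p0) / (q k + q0)) \<longlonglongrightarrow> - (p0 + p0) / (q0 + q0)"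
    using assms(3) by (intro tendsto_intros assms(4,5)) auto
  moreover have "(\<lambda>k. q k + q0) \<longlonglongrightarrow> q0 + q0"
    by (intro tendsto_intros assms(5))
  then have "eventually (\<lambda>k. q k + q0 \<noteq> 0) sequentially"
    by (rule tendsto_imp_eventually_ne) (use assms(3) in simp)
  then have "eventually (\<lambda>k. - (p k + p0) / (q k + q0) = (q k - q0) / (p k - p0)) sequentially"
  proof eventually_elim
    case (elim k)
    have "(q k - q0) * (q k + q0) = - (p k - p0) * (p k + p0)"
      using assms(1)[of k] assms(2) by (simp add: algebra_simps power2_eq_square)
    then show ?case
      using elim assms(6)[of k] by (simp add: field_simps)
  qed
  ultimately show ?thesis
    using assms(3) by (simp add: Lim_transform_eventually)
qed

lemma span_pair_eq_of_combination:
  fixes a e :: "'a::real_vector"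
  assumes "m \<noteq> 0"
  shows "span {c *\<^sub>R a + m *\<^sub>R e, a} = span {a, e}"
proof -
  have "e = (1 / m) *\<^sub>R ((c *\<^sub>R a + m *\<^sub>R e) - c *\<^sub>R a)"
    using assms by simp
  then have "e \<in> span {c *\<^sub>R a + m *\<^sub>R e, a}"
    by (metis insert_iff span_base span_diff span_scale)
  then show ?thesis
    unfolding span_eq by (auto intro: span_base span_add span_scale)
qed

context
  fixes a e :: "'a::real_inner"
  assumes a_unit: "a \<bullet> a = 1" and e_unit: "e \<bullet> e = 1" and a_orth_e: "a \<bullet> e = 0"
begin

lemma inner_orthonormal_combinations:
  "(x *\<^sub>R a + y *\<^sub>R e) \<bullet> (x' *\<^sub>R a + y' *\<^sub>R e) = x * x' + y * y'"
  using a_unit e_unit a_orth_e by (simp add: inner_add_left inner_add_right inner_commute)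

lemma orthonormal_expansion_in_span:
  assumes "v \<in> span {a, e}"
  shows "v = (a \<bullet> v) *\<^sub>R a + (e \<bullet> v) *\<^sub>R e"
proof -
  obtain x y where "v - x *\<^sub>R a = y *\<^sub>R e"
    using assms by (auto simp: span_insert span_singleton)
  then have v: "v = x *\<^sub>R a + y *\<^sub>R e"
    by (metis diff_eq_eq add.commute)
  show ?thesis
    using inner_orthonormal_combinations[of 1 0 x y] inner_orthonormal_combinations[of 0 1 x y]
    by (simp add: v)
qed

lemma coordinates_on_unit_circle:
  assumes "v \<in> span {a, e}" "norm v = 1"
  shows "(a \<bullet> v)\<^sup>2 + (e \<bullet> v)\<^sup>2 = 1"
  using assms inner_orthonormal_combinations[of "a \<bullet> v" "e \<bullet> v" "a \<bullet> v" "e \<bullet> v"]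
    orthonormal_expansion_in_span[OF assms(1)]
  by (simp add: dot_square_norm power2_eq_square)

lemma difference_quotient_tendsto_on_circle:
  fixes X :: "nat \<Rightarrow> 'a"
  assumes "\<bar>t\<bar> < 1" and lam: "lam = c *\<^sub>R a + m *\<^sub>R e"
    and u: "u = (- t) *\<^sub>R a + sqrt (1 - t\<^sup>2) *\<^sub>R e"
    and X: "\<And>k. X k \<in> span {a, e}" "\<And>k. norm (X k) = 1" "\<And>k. a \<bullet> X k \<noteq> - t"
    and "X \<longlonglongrightarrow> u"
  shows "(\<lambda>k. (lam \<bullet> (X k - u)) / (a \<bullet> (X k - u))) \<longlonglongrightarrow> c + m * t / sqrt (1 - t\<^sup>2)"
proof -
  define r where "r = sqrt (1 - t\<^sup>2)"
  define p q where "p k = a \<bullet> X k" and "q k = e \<bullet> X k" for k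
  have r_pos: "0 < r" and rsq: "r\<^sup>2 = 1 - t\<^sup>2"
    using assms(1) by (simp_all add: r_def abs_square_less_1 less_imp_le)
  have circle: "(p k)\<^sup>2 + (q k)\<^sup>2 = 1" for k
    unfolding p_def q_def using X(1,2) by (rule coordinates_on_unit_circle)
  have "p \<longlonglongrightarrow> a \<bullet> u" "q \<longlonglongrightarrow> e \<bullet> u"
    unfolding p_def q_def by (intro tendsto_intros assms(7))+
  moreover have u_coords: "a \<bullet> u = - t" "e \<bullet> u = r"
    using inner_orthonormal_combinations[of 1 0 "- t" r] inner_orthonormal_combinations[of 0 1 "- t" r]
    by (simp_all add: u r_def)
  ultimately have p_lim: "p \<longlonglongrightarrow> - t" and q_lim: "q \<longlonglongrightarrow> r"
    by simp_all
  have "p k \<noteq> - t" for k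
    using X(3) by (simp add: p_def)
  with circle p_lim q_lim have "(\<lambda>k. (q k - r) / (p k - - t)) \<longlonglongrightarrow> - (- t) / r"
    using r_pos rsq by (intro unit_circle_chord_slope_tendsto) auto
  then have "(\<lambda>k. (q k - r) / (p k + t)) \<longlonglongrightarrow> t / r"
    by simp
  then have "(\<lambda>k. c + m * ((q k - r) / (p k + t))) \<longlonglongrightarrow> c + m * (t / r)"
    by (intro tendsto_add tendsto_mult tendsto_const)
  moreover have "(lam \<bullet> (X k - u)) / (a \<bullet> (X k - u)) = c + m * ((q k - r) / (p k + t))" for k
  proof -
    have "lam \<bullet> (X k - u) = c * (p k + t) + m * (q k - r)" "a \<bullet> (X k - u) = p k + t"
      using u_coords by (simp_all add: lam p_def q_def algebra_simps)
    moreover have "p k + t \<noteq> 0"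
      using X(3)[of k] by (simp add: p_def)
    ultimately show ?thesis
      by (simp add: field_simps)
  qed
  ultimately show ?thesis
    by (simp add: r_def)
qed

lemma exists_unit_seq_in_open_halfspace_tendsto:
  assumes "\<bar>t\<bar> < 1"
  obtains X :: "nat \<Rightarrow> 'a"
  where "\<And>k. X k \<in> span {a, e}" "\<And>k. norm (X k) = 1" "\<And>k. a \<bullet> X k + t < 0"
    and "X \<longlonglongrightarrow> (- t) *\<^sub>R a + sqrt (1 - t\<^sup>2) *\<^sub>R e"
proof
  define p where "p k = - t - (1 - t) / real (k + 2)" for k
  define X where "X k = p k *\<^sub>R a + sqrt (1 - (p k)\<^sup>2) *\<^sub>R e" for k
  have step_pos: "0 < (1 - t) / real (k + 2)" for k
    using assms by simp
  have step_le: "(1 - t) / real (k + 2) \<le> (1 - t) / 1" for k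
    using assms by (intro divide_left_mono) auto
  have p_bounds: "- 1 \<le> p k" "p k < - t" for k
    using step_pos[of k] step_le[of k] unfolding p_def by auto
  have p_sq: "(p k)\<^sup>2 \<le> 1" for k
    using p_bounds[of k] assms by (simp add: abs_square_le_1)
  show "X k \<in> span {a, e}" for k
    by (simp add: X_def span_add span_scale span_base)
  show "norm (X k) = 1" for k
    using inner_orthonormal_combinations[of "p k" "sqrt (1 - (p k)\<^sup>2)" "p k" "sqrt (1 - (p k)\<^sup>2)"] p_sq[of k]
    by (simp add: X_def norm_eq_sqrt_inner power2_eq_square[symmetric])
  show "a \<bullet> X k + t < 0" for k
    using inner_orthonormal_combinations[of 1 0 "p k" "sqrt (1 - (p k)\<^sup>2)"] p_bounds(2)[of k]
    by (simp add: X_def)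
  have "(\<lambda>k. (1 - t) / real (k + 2)) \<longlonglongrightarrow> 0"
    using LIMSEQ_ignore_initial_segment[OF lim_const_over_n, of "1 - t" 2] by simp
  then have "p \<longlonglongrightarrow> - t - 0"
    unfolding p_def by (intro tendsto_intros)
  then have "X \<longlonglongrightarrow> (- t) *\<^sub>R a + sqrt (1 - (- t)\<^sup>2) *\<^sub>R e"
    unfolding X_def by (intro tendsto_intros) simp_all
  then show "X \<longlonglongrightarrow> (- t) *\<^sub>R a + sqrt (1 - t\<^sup>2) *\<^sub>R e"
    by simp
qed

end

lemma phi_val_in_orthonormal_frame:
  fixes a e lam :: "'a::euclidean_space" and d beta :: "'b::euclidean_space"
  assumes a: "a \<bullet> a = 1" and e: "e \<bullet> e = 1" "a \<bullet> e = 0"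
    and lam: "lam = c *\<^sub>R a + sqrt (1 - c\<^sup>2) *\<^sub>R e"
    and "\<bar>c\<bar> < 1" "\<bar>d \<bullet> beta\<bar> < 1" "0 \<le> c + d \<bullet> beta"
  shows "phi_val lam a d beta = sqrt (1 - c\<^sup>2) * sqrt (1 - (d \<bullet> beta)\<^sup>2) - c * (d \<bullet> beta)"
proof -
  define t m r where "t = d \<bullet> beta" and "m = sqrt (1 - c\<^sup>2)" and "r = sqrt (1 - t\<^sup>2)"
  define u where "u = (- t) *\<^sub>R a + r *\<^sub>R e"
  have r_pos: "0 < r" and m_nonneg: "0 \<le> m"
    using assms(5,6) by (simp_all add: r_def t_def m_def abs_square_less_1 abs_square_le_1)
  \<comment> \<open>KKT certificate for the maximiser u\<close>
  have "lam = (m / r) *\<^sub>R u + ((t * m + c * r) / r) *\<^sub>R a"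
    using r_pos by (simp add: u_def lam m_def algebra_simps diff_divide_distrib add_divide_distrib)
  moreover have "0 \<le> t * m + c * r"
    using assms(5-7) unfolding m_def r_def t_def
    by (intro sqrt_one_minus_square_combination_nonneg) auto
  moreover have "u \<bullet> u = 1" "a \<bullet> u = - t"
    using inner_orthonormal_combinations[OF a e, of "- t" r "- t" r]
      inner_orthonormal_combinations[OF a e, of 1 0 "- t" r] assms(6)
    by (simp_all add: u_def r_def t_def power2_eq_square[symmetric] abs_square_le_1)
  ultimately have "phi_val lam a d beta = lam \<bullet> u"
    using r_pos m_nonneg
    by (intro phi_val_eq_at_conic_combination[where p = "m / r" and q = "(t * m + c * r) / r"])
      (auto simp: norm_eq_sqrt_inner t_def)
  also have "\<dots> = m * r - c * t"
    using inner_orthonormal_combinations[OF a e, of c m "- t" r] by (simp add: lam u_def m_def)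
  finally show ?thesis
    by (simp add: m_def r_def t_def)
qed

theorem lemma2:
  fixes a lam :: "'a::euclidean_space" and beta d :: "'b::euclidean_space"
  assumes "norm a = 1" and "norm lam = 1" and "norm beta = 1"
    and "lam \<noteq> a" and "lam \<noteq> - a"
    and "norm d < 1"
    and "lam \<bullet> a + d \<bullet> beta \<ge> 0"
  defines "s \<equiv> sqrt ((1 - (d \<bullet> beta)\<^sup>2) / (1 - (lam \<bullet> a)\<^sup>2))"
  defines "xb \<equiv> s *\<^sub>R lam - (d \<bullet> beta + (lam \<bullet> a) * s) *\<^sub>R a"
  shows "(\<forall>X :: nat \<Rightarrow> 'a.
            (\<forall>k. X k \<in> span {lam, a} \<and> norm (X k) = 1 \<and> a \<bullet> X k + d \<bullet> beta < 0)
            \<and> X \<longlonglongrightarrow> xb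
          \<longrightarrow> (\<lambda>k. (lam \<bullet> (X k - xb)) / (a \<bullet> (X k - xb)))
                \<longlonglongrightarrow> (d \<bullet> beta + (lam \<bullet> a) * phi_val lam a d beta)
                     / (phi_val lam a d beta + (d \<bullet> beta) * (lam \<bullet> a)))
       \<and> (\<exists>X :: nat \<Rightarrow> 'a.
            (\<forall>k. X k \<in> span {lam, a} \<and> norm (X k) = 1 \<and> a \<bullet> X k + d \<bullet> beta < 0)
            \<and> X \<longlonglongrightarrow> xb)"
proof -
  define c t where "c = lam \<bullet> a" and "t = d \<bullet> beta"
  define m r where "m = sqrt (1 - c\<^sup>2)" and "r = sqrt (1 - t\<^sup>2)"
  have c_lt: "\<bar>c\<bar> < 1"
    unfolding c_def using assms(1,2,4,5) by (rule abs_inner_less_one_of_unit_vectors)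
  have t_lt: "\<bar>t\<bar> < 1"
    using Cauchy_Schwarz_ineq2[of d beta] assms(3,6) by (simp add: t_def)
  obtain e where e: "e \<bullet> e = 1" "a \<bullet> e = 0" and lam: "lam = c *\<^sub>R a + m *\<^sub>R e"
    using orthonormal_frame_of_unit_vectors[OF assms(1,2)] c_lt unfolding c_def m_def by blast
  have a: "a \<bullet> a = 1"
    using assms(1) by (simp add: dot_square_norm)
  have m_pos: "0 < m" and r_pos: "0 < r" and msq: "m\<^sup>2 = 1 - c\<^sup>2"
    using c_lt t_lt by (simp_all add: m_def r_def abs_square_less_1 less_imp_le)
  have "s = r / m"
    unfolding s_def m_def r_def c_def t_def by (rule real_sqrt_divide)
  moreover have "xb = s *\<^sub>R lam - (t + c * s) *\<^sub>R a"
    by (simp add: xb_def c_def t_def)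
  ultimately have xb: "xb = (- t) *\<^sub>R a + r *\<^sub>R e"
    using m_pos by (simp add: lam algebra_simps)
  have phi: "phi_val lam a d beta = m * r - c * t"
    using phi_val_in_orthonormal_frame[OF a e lam[unfolded m_def] c_lt] t_lt assms(7)
    by (simp add: m_def r_def c_def t_def)
  have limit_value: "(t + c * (m * r - c * t)) / (m * r - c * t + t * c) = c + m * t / r"
    using m_pos r_pos msq by (simp add: field_simps power2_eq_square) algebra
  have span_frame: "span {lam, a} = span {a, e}"
    using m_pos by (simp add: lam span_pair_eq_of_combination)
  show ?thesis
    unfolding c_def[symmetric] t_def[symmetric] phi limit_value span_frame
  proof (intro conjI allI impI)
    fix X :: "nat \<Rightarrow> 'a"
    assume X: "(\<forall>k. X k \<in> span {a, e} \<and> norm (X k) = 1 \<and> a \<bullet> X k + t < 0) \<and> X \<longlonglongrightarrow> xb"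
    have "a \<bullet> X k \<noteq> - t" for k
      using X[THEN conjunct1, rule_format, of k] by linarith
    with X show "(\<lambda>k. lam \<bullet> (X k - xb) / (a \<bullet> (X k - xb))) \<longlonglongrightarrow> c + m * t / r"
      using difference_quotient_tendsto_on_circle[OF a e t_lt lam xb[unfolded r_def], folded r_def]
      by blast
  next
    show "\<exists>X. (\<forall>k. X k \<in> span {a, e} \<and> norm (X k) = 1 \<and> a \<bullet> X k + t < 0) \<and> X \<longlonglongrightarrow> xb"
      using exists_unit_seq_in_open_halfspace_tendsto[OF a e t_lt] xb unfolding r_def by metis
  qed
qed

end
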